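(* Let $d\ge 2$. There are a constant $C>0$ and $n_0(d)$ depending only on $d$ such that for all $n\ge n_0(d)$: if $\mathcal{F}$, $B_i$ are as in the context, $J\subseteq[n]$ with $|J|\le n/4$, and $K\ge 0$ is a real number with $|E(\mathcal{G}_J)|\ge\binom{n-|J|}{d}-Kn$, then $$|\mathcal{T}_J^2\cup\mathcal{T}_J^3|\le\binom{n-|J|}{d}+C\left(K+\sqrt{Kn^{d-1}}+n^{d-2}\right).$$
   Context: Let $\mathcal{F}=\{F_1,\dots,F_m\}\subseteq\binom{[n]}{d+1}$ consist of distinct sets and have VC-dimension at most $d$ (no $(d+1)$-set $S$ is shattered, i.e. no $S$ such that every $A\subseteq S$ equals $F\cap S$ for some $F\in\mathcal{F}$). For $i\in[m]$, call $B\subsetneq F_i$ admissible for $F_i$ if $F\cap F_i\neq B$ for every $F\in\mathcal{F}$. For each $i$, $B_i$ is a fixed admissible set for $F_i$ of maximum cardinality among all admissible sets. For $J\subseteq[n]$, $\mathcal{G}_J$ is the $d$-uniform hypergraph on vertex set $[n]\setminus J$ with edge set $E(\mathcal{G}_J):=\{F_k\setminus J: k\in[m],\ |F_k\cap J|=1\}$. $\mathcal{T}_J^2$ is the set of $F_k\in\mathcal{F}$ with $B_k\subseteq[n]\setminus J$ and $|B_k|=d$; $\mathcal{T}_J^3$ is the set of $F_k\in\mathcal{F}$ with $|F_k\cap J|=1$, $B_k\subseteq[n]\setminus J$ and $|B_k|=d-1$. *)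

theory Defs
  imports Complex_Main
begin

definition shattered :: "nat \<Rightarrow> (nat \<Rightarrow> nat set) \<Rightarrow> nat set \<Rightarrow> bool" where
  "shattered m F S \<longleftrightarrow> (\<forall>A. A \<subseteq> S \<longrightarrow> (\<exists>k\<in>{1..m}. F k \<inter> S = A))"

definition vc_dim_le :: "nat \<Rightarrow> nat \<Rightarrow> (nat \<Rightarrow> nat set) \<Rightarrow> nat \<Rightarrow> bool" where
  "vc_dim_le n m F d \<longleftrightarrow> (\<forall>S. S \<subseteq> {1..n} \<and> card S = d + 1 \<longrightarrow> \<not> shattered m F S)"

definition admissible :: "nat \<Rightarrow> (nat \<Rightarrow> nat set) \<Rightarrow> nat \<Rightarrow> nat set \<Rightarrow> bool" where
  "admissible m F i B \<longleftrightarrow> B \<subset> F i \<and> (\<forall>k\<in>{1..m}. F k \<inter> F i \<noteq> B)"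

definition edges_G :: "nat \<Rightarrow> (nat \<Rightarrow> nat set) \<Rightarrow> nat set \<Rightarrow> nat set set" where
  "edges_G m F J = {F k - J | k. k \<in> {1..m} \<and> card (F k \<inter> J) = 1}"

definition T2 :: "nat \<Rightarrow> nat \<Rightarrow> nat \<Rightarrow> (nat \<Rightarrow> nat set) \<Rightarrow> (nat \<Rightarrow> nat set) \<Rightarrow> nat set \<Rightarrow> nat set set" where
  "T2 n d m F B J = {F k | k. k \<in> {1..m} \<and> B k \<subseteq> {1..n} - J \<and> card (B k) = d}"

definition T3 :: "nat \<Rightarrow> nat \<Rightarrow> nat \<Rightarrow> (nat \<Rightarrow> nat set) \<Rightarrow> (nat \<Rightarrow> nat set) \<Rightarrow> nat set \<Rightarrow> nat set set" where
  "T3 n d m F B J = {F k | k. k \<in> {1..m} \<and> card (F k \<inter> J) = 1 \<and> B k \<subseteq> {1..n} - J \<and> card (B k) = d - 1}"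

end

theory Submission
  imports Defs
begin

text \<open>Send a member of \<open>T2\<close> to \<open>B k\<close> and a member of \<open>T3\<close> to its trace \<open>F k - J\<close>.
  Both are \<open>d\<close>-subsets of \<open>[n] - J\<close>, and by admissibility the map is injective except on
  twins: distinct members of \<open>T3\<close> with the same trace, which differ in their apex (the
  point in \<open>J\<close>). Twins with equal \<open>B\<close> force every \<open>B k \<union> {y}\<close>, \<open>y\<close> outside the trace,
  to be missing from \<open>G_J\<close>; as at most \<open>Kn\<close> edges are missing, double counting leaves \<open>O(K)\<close>
  of them. Twins with \<open>B k = C \<union> {b}\<close>, \<open>B l = C \<union> {a}\<close> give a split edge \<open>{a, b}\<close> over the
  \<open>(d-2)\<close>-set \<open>C\<close>. The split edges over \<open>C\<close> form a matching, and any two of them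
  produce a missing \<open>d\<close>-set through \<open>C\<close>; so if \<open>C\<close> carries \<open>s\<close> split edges then
  \<open>s choose 2\<close> is at most the number of missing sets above \<open>C\<close>, and Cauchy-Schwarz over all
  \<open>C\<close> bounds the split edges by \<open>n^(d-2) + O(sqrt (K n^(d-1)))\<close>.\<close>

lemma card_le_mult_card_image:
  assumes "finite A" and "\<And>y. y \<in> f ` A \<Longrightarrow> card {x\<in>A. f x = y} \<le> c"
  shows "card A \<le> c * card (f ` A)"
proof -
  have "card A = card (\<Union>y\<in>f ` A. {x\<in>A. f x = y})"
    by (rule arg_cong[of _ _ card]) auto
  also have "\<dots> \<le> (\<Sum>y\<in>f ` A. card {x\<in>A. f x = y})"
    using assms(1) by (intro card_UN_le) simp
  also have "\<dots> \<le> (\<Sum>y\<in>f ` A. c)"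
    using assms(2) by (rule sum_mono)
  finally show ?thesis by (simp add: mult.commute)
qed

lemma card_doubleton_le: "card {a, b} \<le> 2"
  by (simp add: card_insert_if)

lemma card_le_2_if_no_three:
  assumes "finite A"
    and "\<And>x y z. x \<in> A \<Longrightarrow> y \<in> A \<Longrightarrow> z \<in> A \<Longrightarrow> x \<noteq> y \<Longrightarrow> x \<noteq> z \<Longrightarrow> y \<noteq> z \<Longrightarrow> False"
  shows "card A \<le> 2"
proof (rule ccontr)
  assume "\<not> card A \<le> 2"
  then have "Suc (Suc (Suc 0)) \<le> card A" by simp
  then obtain x y z where "x \<in> A" "y \<in> A" "z \<in> A" "x \<noteq> y" "x \<noteq> z" "y \<noteq> z"
    unfolding card_le_Suc_iff by (metis insert_iff)
  then show False using assms(2) by blast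
qed

lemma sum_card_related_le:
  assumes "finite X" and "finite Y" and "\<And>y. y \<in> Y \<Longrightarrow> card {x\<in>X. R x y} \<le> b"
  shows "(\<Sum>x\<in>X. card {y\<in>Y. R x y}) \<le> b * card Y"
proof -
  have "(\<Sum>x\<in>X. card {y\<in>Y. R x y}) = (\<Sum>y\<in>Y. card {x\<in>X. R x y})"
    using assms(1,2) by (rule sum_multicount_gen) simp
  also have "\<dots> \<le> (\<Sum>y\<in>Y. b)"
    using assms(3) by (rule sum_mono)
  finally show ?thesis by (simp add: mult.commute)
qed

lemma double_counting_le:
  assumes "finite X" and "finite Y"
    and "\<And>x. x \<in> X \<Longrightarrow> a \<le> card {y\<in>Y. R x y}"
    and "\<And>y. y \<in> Y \<Longrightarrow> card {x\<in>X. R x y} \<le> b"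
  shows "a * card X \<le> b * card Y"
proof -
  have "a * card X = (\<Sum>x\<in>X. a)" by simp
  also have "\<dots> \<le> (\<Sum>x\<in>X. card {y\<in>Y. R x y})"
    using assms(3) by (rule sum_mono)
  also have "\<dots> \<le> b * card Y"
    using assms(1,2,4) by (rule sum_card_related_le)
  finally show ?thesis .
qed

lemma le_of_choose_two_le:
  fixes s c :: nat and t :: real
  assumes "s choose 2 \<le> c" and "t > 0"
  shows "real s \<le> 1 + t / 2 + real c / t"
proof (cases "s = 0")
  case True
  then show ?thesis using assms(2) by simp
next
  case False
  define a where "a = real s - 1"
  have "s * (s - 1) = 2 * (s choose 2)"
    using binomial_absorption[of 1 s] by (simp add: numeral_2_eq_2)
  then have "a\<^sup>2 \<le> 2 * real c"
    using False assms(1) unfolding a_def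
    by (simp add: power2_eq_square algebra_simps of_nat_diff flip: of_nat_mult)
  moreover have "2 * t * a \<le> a\<^sup>2 + t\<^sup>2"
    using sum_squares_ge_zero[of "a - t" 0] by (simp add: power2_eq_square algebra_simps)
  ultimately have "a \<le> (2 * real c + t\<^sup>2) / (2 * t)"
    using assms(2) by (simp add: field_simps)
  also have "\<dots> = real c / t + t / 2"
    using assms(2) by (simp add: field_simps power2_eq_square)
  finally show ?thesis unfolding a_def by simp
qed

lemma sum_le_card_plus_sqrt:
  fixes s c :: "'a \<Rightarrow> nat"
  assumes "finite S" and "\<And>x. x \<in> S \<Longrightarrow> s x choose 2 \<le> c x"
  shows "real (\<Sum>x\<in>S. s x) \<le> real (card S) + sqrt (2 * real (card S) * real (\<Sum>x\<in>S. c x))"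
proof -
  define N M where "N = real (card S)" and "M = real (\<Sum>x\<in>S. c x)"
  consider "M = 0" | "N = 0" | "M > 0" "N > 0"
    unfolding N_def M_def by linarith
  then show ?thesis
  proof cases
    case 1
    have "s x \<le> 1" if "x \<in> S" for x
    proof -
      have "s x choose 2 = 0"
        using 1 assms that unfolding M_def by (metis le_zero_eq of_nat_eq_0_iff sum_eq_0_iff)
      then show ?thesis by (simp add: binomial_eq_0_iff numeral_2_eq_2 less_Suc_eq_le)
    qed
    then have "(\<Sum>x\<in>S. s x) \<le> card S"
      using sum_mono[of S s "\<lambda>_. 1"] by simp
    moreover have "0 \<le> sqrt (2 * real (card S) * real (\<Sum>x\<in>S. c x))"
      by (simp del: of_nat_sum)
    ultimately show ?thesis
      by (metis add_increasing2 of_nat_le_iff)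
  next
    case 2
    then show ?thesis
      using assms(1) unfolding N_def by simp
  next
    case 3
    define r where "r = sqrt (2 * N * M)"
    have r: "r > 0" "r\<^sup>2 = 2 * N * M"
      using 3 unfolding r_def by simp_all
    define t where "t = r / N"
    have "t > 0" using r(1) 3 unfolding t_def by simp
    have "real (\<Sum>x\<in>S. s x) \<le> (\<Sum>x\<in>S. 1 + t / 2 + real (c x) / t)"
      unfolding of_nat_sum using assms(2) \<open>t > 0\<close> by (intro sum_mono le_of_choose_two_le)
    also have "\<dots> = N + N * t / 2 + M / t"
      unfolding N_def M_def by (simp add: sum.distrib sum_divide_distrib algebra_simps)
    also have "\<dots> = N + r"
      using r 3 unfolding t_def by (simp add: field_simps power2_eq_square)
    finally show ?thesis unfolding N_def M_def r_def by simp
  qed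
qed

locale admissible_family =
  fixes n m d :: nat and F B :: "nat \<Rightarrow> nat set" and J :: "nat set"
  assumes d_ge_2: "d \<ge> 2"
    and F_subset: "\<And>i. i \<in> {1..m} \<Longrightarrow> F i \<subseteq> {1..n}"
    and card_F: "\<And>i. i \<in> {1..m} \<Longrightarrow> card (F i) = d + 1"
    and inj_F: "inj_on F {1..m}"
    and admissible_B: "\<And>i. i \<in> {1..m} \<Longrightarrow> admissible m F i (B i)"
    and card_admissible_le: "\<And>i B'. i \<in> {1..m} \<Longrightarrow> admissible m F i B' \<Longrightarrow> card B' \<le> card (B i)"
    and J_subset: "J \<subseteq> {1..n}"
begin

definition V :: "nat set" where
  "V = {1..n} - J"

abbreviation trace :: "nat \<Rightarrow> nat set" where
  "trace k \<equiv> F k - J"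

definition T2_idx :: "nat set" where
  "T2_idx = {k\<in>{1..m}. B k \<subseteq> V \<and> card (B k) = d}"

definition T3_idx :: "nat set" where
  "T3_idx = {k\<in>{1..m}. card (F k \<inter> J) = 1 \<and> B k \<subseteq> V \<and> card (B k) = d - 1}"

definition d_sets :: "nat set set" where
  "d_sets = {D. D \<subseteq> V \<and> card D = d}"

definition missing :: "nat set set" where
  "missing = d_sets - edges_G m F J"

text \<open>\<open>apex\<close> and \<open>extra\<close> are meaningful only on \<open>T3_idx\<close>, where
  \<open>F k = {apex k, extra k} \<union> B k\<close> with \<open>apex k \<in> J\<close>.\<close>

definition apex :: "nat \<Rightarrow> nat" where
  "apex k = the_elem (F k \<inter> J)"

definition extra :: "nat \<Rightarrow> nat" where
  "extra k = the_elem (trace k - B k)"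

lemma finite_V: "finite V"
  unfolding V_def by simp

lemma V_Int_J: "V \<inter> J = {}"
  unfolding V_def by blast

lemma card_V: "card V = n - card J"
  unfolding V_def using J_subset by (simp add: card_Diff_subset finite_subset)

lemma finite_F: "k \<in> {1..m} \<Longrightarrow> finite (F k)"
  using F_subset finite_subset by blast

lemma trace_subset_V: "k \<in> {1..m} \<Longrightarrow> trace k \<subseteq> V"
  using F_subset unfolding V_def by blast

lemma card_trace:
  assumes "k \<in> {1..m}" and "card (F k \<inter> J) = 1"
  shows "card (trace k) = d"
  using card_Diff_subset_Int[of "F k" J] finite_F[OF assms(1)] assms card_F
  by (simp add: Int_commute)

lemma edges_G_subset_d_sets: "edges_G m F J \<subseteq> d_sets"
  unfolding edges_G_def d_sets_def using trace_subset_V card_trace by blast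

lemma B_psubset_F: "k \<in> {1..m} \<Longrightarrow> B k \<subset> F k"
  using admissible_B unfolding admissible_def by blast

lemma F_Int_F_neq_B: "k \<in> {1..m} \<Longrightarrow> q \<in> {1..m} \<Longrightarrow> F q \<inter> F k \<noteq> B k"
  using admissible_B unfolding admissible_def by blast

lemma finite_B: "k \<in> {1..m} \<Longrightarrow> finite (B k)"
  using B_psubset_F finite_F finite_subset by blast

lemma mem_if_B_subset:
  assumes "k \<in> {1..m}" "q \<in> {1..m}" and "F k = insert a (insert b (B k))"
    and "B k \<subseteq> F q" and "a \<notin> F q"
  shows "b \<in> F q"
proof (rule ccontr)
  assume "b \<notin> F q"
  then have "F q \<inter> F k = B k" using assms(3-5) by auto
  then show False using F_Int_F_neq_B assms(1,2) by blast
qed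

lemma T2_idx_F_eq:
  assumes "k \<in> T2_idx"
  obtains x where "x \<notin> B k" and "F k = insert x (B k)"
proof -
  have k: "k \<in> {1..m}" "card (B k) = d" using assms unfolding T2_idx_def by auto
  have "card (F k - B k) = 1"
    using card_Diff_subset[OF finite_B[OF k(1)]] B_psubset_F[OF k(1)] card_F[OF k(1)] k(2) by auto
  then obtain x where "F k - B k = {x}" by (rule card_1_singletonE)
  then show thesis using that B_psubset_F[OF k(1)] by blast
qed

lemma inj_on_B_T2_idx: "inj_on B T2_idx"
proof (rule inj_onI)
  fix k l assume kl: "k \<in> T2_idx" "l \<in> T2_idx" "B k = B l"
  then have idx: "k \<in> {1..m}" "l \<in> {1..m}" unfolding T2_idx_def by auto
  obtain x y where x: "x \<notin> B k" "F k = insert x (B k)" and y: "y \<notin> B l" "F l = insert y (B l)"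
    using T2_idx_F_eq kl(1,2) by metis
  show "k = l"
  proof (cases "x = y")
    case True
    then show ?thesis using x y kl(3) inj_onD[OF inj_F _ idx] by simp
  next
    case False
    then have "F l \<inter> F k = B k" using x y kl(3) by auto
    then show ?thesis using F_Int_F_neq_B idx by blast
  qed
qed

lemma T3_idx_D:
  assumes "k \<in> T3_idx"
  shows "k \<in> {1..m}" and "card (F k \<inter> J) = 1" and "B k \<subseteq> V" and "card (B k) = d - 1"
  using assms unfolding T3_idx_def by auto

lemma F_Int_J_eq_apex: "k \<in> T3_idx \<Longrightarrow> F k \<inter> J = {apex k}"
  unfolding apex_def using T3_idx_D(2) by (metis card_1_singletonE the_elem_eq)

lemma apex_in_J: "k \<in> T3_idx \<Longrightarrow> apex k \<in> J"
  using F_Int_J_eq_apex by blast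

lemma B_subset_trace: "k \<in> T3_idx \<Longrightarrow> B k \<subseteq> trace k"
  using B_psubset_F T3_idx_D V_Int_J by blast

lemma trace_minus_B_eq_extra: "k \<in> T3_idx \<Longrightarrow> trace k - B k = {extra k}"
proof -
  assume k: "k \<in> T3_idx"
  have "card (trace k - B k) = 1"
    using card_Diff_subset[OF finite_B B_subset_trace] card_trace T3_idx_D[OF k] d_ge_2
    by (simp add: k)
  then show ?thesis unfolding extra_def by (metis card_1_singletonE the_elem_eq)
qed

lemma trace_eq_insert_extra: "k \<in> T3_idx \<Longrightarrow> trace k = insert (extra k) (B k)"
  using trace_minus_B_eq_extra B_subset_trace by blast

lemma extra_notin_B: "k \<in> T3_idx \<Longrightarrow> extra k \<notin> B k"
  using trace_minus_B_eq_extra by blast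

lemma extra_notin_J: "k \<in> T3_idx \<Longrightarrow> extra k \<notin> J"
  using trace_minus_B_eq_extra by blast

lemma B_eq_trace_minus_extra: "k \<in> T3_idx \<Longrightarrow> B k = trace k - {extra k}"
  using trace_eq_insert_extra extra_notin_B by auto

lemma F_eq_apex_trace: "k \<in> T3_idx \<Longrightarrow> F k = insert (apex k) (trace k)"
  using F_Int_J_eq_apex by blast

lemma F_eq_apex_extra_B: "k \<in> T3_idx \<Longrightarrow> F k = insert (apex k) (insert (extra k) (B k))"
  using F_eq_apex_trace trace_eq_insert_extra by metis

lemma B_T2_neq_trace_T3:
  assumes "k \<in> T2_idx" and "l \<in> T3_idx"
  shows "B k \<noteq> trace l"
proof
  assume eq: "B k = trace l"
  have k: "k \<in> {1..m}" "card (B k) = d" using assms(1) unfolding T2_idx_def by auto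
  obtain x where x: "x \<notin> B k" "F k = insert x (B k)" using T2_idx_F_eq assms(1) by blast
  have "F l = insert (apex l) (B k)" using F_eq_apex_trace[OF assms(2)] eq by metis
  moreover have "apex l \<notin> B k" using eq apex_in_J[OF assms(2)] by blast
  ultimately show False
    using F_Int_F_neq_B[OF k(1) T3_idx_D(1)[OF assms(2)]] x inj_onD[OF inj_F _ k(1) T3_idx_D(1)[OF assms(2)]]
      T3_idx_D(4)[OF assms(2)] k(2) d_ge_2 by (cases "x = apex l") auto
qed

definition twins :: "(nat \<times> nat) set" where
  "twins = {(k, l). k \<in> T3_idx \<and> l \<in> T3_idx \<and> k \<noteq> l \<and> trace k = trace l}"

lemma finite_T3_idx: "finite T3_idx"
  unfolding T3_idx_def by simp

lemma finite_twins: "finite twins"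
  using finite_subset[of twins "T3_idx \<times> T3_idx"] finite_T3_idx unfolding twins_def by auto

lemma card_T_idx_le_twins: "card (T2_idx \<union> T3_idx) \<le> card d_sets + card twins"
proof -
  define A where "A = T2_idx \<union> (T3_idx - fst ` twins)"
  define g where "g k = (if k \<in> T2_idx then B k else trace k)" for k
  have paired: "k \<in> fst ` twins" if "k \<in> T3_idx" "l \<in> T3_idx" "k \<noteq> l" "trace k = trace l" for k l
    using that unfolding twins_def by force
  have "inj_on g A"
  proof (rule inj_onI)
    fix k l assume k: "k \<in> A" and l: "l \<in> A" and eq: "g k = g l"
    consider "k \<in> T2_idx" "l \<in> T2_idx" | "k \<in> T2_idx" "l \<notin> T2_idx" | "k \<notin> T2_idx" "l \<in> T2_idx"
      | "k \<notin> T2_idx" "l \<notin> T2_idx" by blast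
    then show "k = l"
    proof cases
      case 1
      then show ?thesis using eq inj_onD[OF inj_on_B_T2_idx] unfolding g_def by simp
    next
      case 2
      then show ?thesis using eq l B_T2_neq_trace_T3 unfolding g_def A_def by auto
    next
      case 3
      then show ?thesis using eq k B_T2_neq_trace_T3 unfolding g_def A_def by fastforce
    next
      case 4
      then show ?thesis using eq k l paired unfolding g_def A_def by auto
    qed
  qed
  moreover have "g ` A \<subseteq> d_sets"
    using trace_subset_V card_trace unfolding A_def g_def T2_idx_def T3_idx_def d_sets_def by auto
  moreover have "finite d_sets"
    using finite_V unfolding d_sets_def by simp
  ultimately have "card A \<le> card d_sets"
    by (rule card_inj_on_le)
  have "finite A"
    unfolding A_def T2_idx_def T3_idx_def by simp
  have "card (T2_idx \<union> T3_idx) \<le> card (A \<union> fst ` twins)"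
    using \<open>finite A\<close> finite_twins unfolding A_def by (intro card_mono) auto
  also have "\<dots> \<le> card A + card (fst ` twins)"
    by (rule card_Un_le)
  finally show ?thesis
    using \<open>card A \<le> card d_sets\<close> card_image_le[OF finite_twins, of fst] by linarith
qed

lemma T3_eq_if_trace_apex_eq:
  assumes "k \<in> T3_idx" and "l \<in> T3_idx" and "trace k = trace l" and "apex k = apex l"
  shows "k = l"
  using assms F_eq_apex_trace inj_onD[OF inj_F] T3_idx_D(1) by metis

lemma twins_apex_neq: "(k, l) \<in> twins \<Longrightarrow> apex k \<noteq> apex l"
  unfolding twins_def using T3_eq_if_trace_apex_eq by blast

lemma extra_eq_if_trace_B_eq:
  assumes "k \<in> T3_idx" and "l \<in> T3_idx" and "trace k = trace l" and "B k = B l"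
  shows "extra k = extra l"
  using assms trace_minus_B_eq_extra by (metis singleton_inject)

lemma apex_in_F_if_extends:
  assumes "r \<in> T3_idx" and "q \<in> {1..m}" and "B r \<subseteq> F q" and "extra r \<notin> F q"
  shows "apex r \<in> F q"
proof (rule mem_if_B_subset[OF T3_idx_D(1)[OF assms(1)] assms(2) _ assms(3,4)])
  show "F r = insert (extra r) (insert (apex r) (B r))"
    using F_eq_apex_extra_B[OF assms(1)] by (simp add: insert_commute)
qed

lemma apex_eq_if_extends:
  assumes "r \<in> T3_idx" and "s \<in> T3_idx" and "q \<in> {1..m}" and "card (F q \<inter> J) = 1"
    and "B r \<subseteq> F q" and "extra r \<notin> F q" and "B s \<subseteq> F q" and "extra s \<notin> F q"
  shows "apex r = apex s"
proof -
  have "apex r \<in> F q \<inter> J" and "apex s \<in> F q \<inter> J"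
    using apex_in_F_if_extends[OF assms(1,3,5,6)] apex_in_F_if_extends[OF assms(2,3,7,8)]
      apex_in_J[OF assms(1)] apex_in_J[OF assms(2)] by simp_all
  then show ?thesis
    using assms(4) by (metis card_1_singletonE singletonD)
qed

definition twins_same :: "(nat \<times> nat) set" where
  "twins_same = {(k, l) \<in> twins. B k = B l}"

definition twin_bases :: "nat set set" where
  "twin_bases = B ` fst ` twins_same"

lemma twins_same_D:
  assumes "(k, l) \<in> twins_same"
  shows "k \<in> T3_idx" and "l \<in> T3_idx" and "k \<noteq> l" and "trace l = trace k" and "B l = B k"
    and "extra l = extra k"
  using assms extra_eq_if_trace_B_eq unfolding twins_same_def twins_def by auto

lemma twins_same_not_extended:
  assumes "(k, l) \<in> twins_same" and "q \<in> {1..m}" and "card (F q \<inter> J) = 1"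
    and "B k \<subseteq> F q" and "extra k \<notin> F q"
  shows False
  using apex_eq_if_extends[OF twins_same_D(1,2)[OF assms(1)] assms(2,3)] assms(4,5)
    twins_same_D(5,6)[OF assms(1)] twins_apex_neq assms(1) unfolding twins_same_def by auto

text \<open>By maximality, the larger set \<open>insert (apex k) (B k)\<close> is not admissible, so it is
  \<open>F r \<inter> F k\<close> for some \<open>r\<close>; then \<open>F r\<close> contains \<open>B k\<close> and all three apexes.\<close>

lemma no_three_twins:
  assumes "k \<in> T3_idx" "l \<in> T3_idx" "q \<in> T3_idx" and "k \<noteq> l" "k \<noteq> q" "l \<noteq> q"
    and "trace l = trace k" "trace q = trace k" and "B l = B k" "B q = B k"
  shows False
proof -
  define D where "D = insert (apex k) (B k)"
  have k: "k \<in> {1..m}" using T3_idx_D(1)[OF assms(1)] .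
  have apex_notin_B: "apex i \<notin> B k" if "i \<in> T3_idx" for i
    using apex_in_J[OF that] T3_idx_D(3)[OF assms(1)] V_Int_J by blast
  have extra_notin_D: "extra k \<notin> D"
    using extra_notin_B[OF assms(1)] extra_notin_J[OF assms(1)] apex_in_J[OF assms(1)]
    unfolding D_def by auto
  have extra_in_F: "extra k \<in> F k" and "D \<subseteq> F k"
    using F_eq_apex_extra_B[OF assms(1)] unfolding D_def by auto
  then have "D \<subset> F k"
    using extra_notin_D by blast
  have "card D = d"
    using apex_notin_B[OF assms(1)] finite_B[OF k] T3_idx_D(4)[OF assms(1)] d_ge_2 unfolding D_def by simp
  then have "\<not> admissible m F k D"
    using card_admissible_le[OF k, of D] T3_idx_D(4)[OF assms(1)] d_ge_2 by linarith
  with \<open>D \<subset> F k\<close> obtain r where r: "r \<in> {1..m}" "F r \<inter> F k = D"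
    unfolding admissible_def by blast
  then have "B k \<subseteq> F r" "apex k \<in> F r" "extra k \<notin> F r"
    using extra_notin_D extra_in_F unfolding D_def by auto
  moreover have "extra l = extra k" "extra q = extra k"
    using extra_eq_if_trace_B_eq[OF assms(2,1,7,9)] extra_eq_if_trace_B_eq[OF assms(3,1,8,10)] .
  ultimately have "apex l \<in> F r" "apex q \<in> F r"
    using apex_in_F_if_extends[OF assms(2) r(1)] apex_in_F_if_extends[OF assms(3) r(1)]
      assms(9,10) by simp_all
  have "apex k \<noteq> apex l" "apex k \<noteq> apex q" "apex l \<noteq> apex q"
    using T3_eq_if_trace_apex_eq[OF assms(1,2)] T3_eq_if_trace_apex_eq[OF assms(1,3)]
      T3_eq_if_trace_apex_eq[OF assms(2,3)] assms(4-8) by auto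
  let ?E = "insert (apex k) (insert (apex l) (insert (apex q) (B k)))"
  have "card ?E = d + 2"
    using \<open>apex k \<noteq> apex l\<close> \<open>apex k \<noteq> apex q\<close> \<open>apex l \<noteq> apex q\<close>
      apex_notin_B[OF assms(1)] apex_notin_B[OF assms(2)] apex_notin_B[OF assms(3)]
      finite_B[OF k] T3_idx_D(4)[OF assms(1)] d_ge_2 by simp
  moreover have "card ?E \<le> card (F r)"
    using \<open>B k \<subseteq> F r\<close> \<open>apex k \<in> F r\<close> \<open>apex l \<in> F r\<close> \<open>apex q \<in> F r\<close>
    by (intro card_mono finite_F r(1)) auto
  ultimately show False
    using card_F[OF r(1)] by simp
qed

lemma T3_eq_twin_if_B_eq:
  assumes "(k, l) \<in> twins_same" and "q \<in> T3_idx" and "B q = B k"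
  shows "q = k \<or> q = l"
proof (cases "extra q = extra k")
  case True
  then have "trace q = trace k"
    using trace_eq_insert_extra[OF assms(2)] trace_eq_insert_extra[OF twins_same_D(1)[OF assms(1)]] assms(3) by simp
  then show ?thesis
    using no_three_twins[OF twins_same_D(1,2)[OF assms(1)] assms(2) twins_same_D(3)[OF assms(1)] _ _
        twins_same_D(4)[OF assms(1)] _ twins_same_D(5)[OF assms(1)] assms(3)]
    by blast
next
  case False
  have "extra k \<noteq> apex q"
    using extra_notin_J[OF twins_same_D(1)[OF assms(1)]] apex_in_J[OF assms(2)] by auto
  then have "extra k \<notin> F q"
    using F_eq_apex_extra_B[OF assms(2)] False assms(3)
      extra_notin_B[OF twins_same_D(1)[OF assms(1)]] by simp
  then show ?thesis
    using twins_same_not_extended[OF assms(1) T3_idx_D(1,2)[OF assms(2)]] B_subset_trace[OF assms(2)]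
      assms(3) by blast
qed

lemma finite_twins_same: "finite twins_same"
  using finite_twins unfolding twins_same_def by (simp add: case_prod_unfold)

lemma card_twins_same_le: "card twins_same \<le> 2 * card twin_bases"
proof -
  have "card twins_same \<le> 2 * card ((\<lambda>z. B (fst z)) ` twins_same)"
  proof (rule card_le_mult_card_image[OF finite_twins_same])
    fix C assume "C \<in> (\<lambda>z. B (fst z)) ` twins_same"
    then obtain k l where kl: "(k, l) \<in> twins_same" "C = B k" by auto
    have "{z \<in> twins_same. B (fst z) = C} \<subseteq> {(k, l), (l, k)}"
    proof
      fix z assume z: "z \<in> {z \<in> twins_same. B (fst z) = C}"
      obtain k' l' where z_eq: "z = (k', l')" by (cases z)
      have "k' \<in> {k, l}" "l' \<in> {k, l}" "k' \<noteq> l'"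
        using z z_eq T3_eq_twin_if_B_eq[OF kl(1)] twins_same_D[of k' l'] kl(2) by auto
      then show "z \<in> {(k, l), (l, k)}" using z_eq by auto
    qed
    then have "card {z \<in> twins_same. B (fst z) = C} \<le> card {(k, l), (l, k)}"
      by (rule card_mono[rotated]) simp
    then show "card {z \<in> twins_same. B (fst z) = C} \<le> 2"
      using card_doubleton_le[of "(k, l)" "(l, k)"] by linarith
  qed
  then show ?thesis unfolding twin_bases_def by (simp add: image_comp comp_def)
qed

lemma insert_twin_base_missing:
  assumes "(k, l) \<in> twins_same" and "y \<in> V - trace k"
  shows "insert y (B k) \<in> missing"
proof -
  have k: "k \<in> T3_idx" using twins_same_D(1)[OF assms(1)] .
  have "y \<notin> B k" using assms(2) B_subset_trace[OF k] by blast
  then have "insert y (B k) \<in> d_sets"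
    using assms(2) T3_idx_D(3,4)[OF k] finite_B[OF T3_idx_D(1)[OF k]] d_ge_2 unfolding d_sets_def by simp
  moreover have "insert y (B k) \<notin> edges_G m F J"
  proof
    assume "insert y (B k) \<in> edges_G m F J"
    then obtain q where q: "q \<in> {1..m}" "card (F q \<inter> J) = 1" "insert y (B k) = trace q"
      unfolding edges_G_def by blast
    have "extra k \<noteq> y"
      using assms(2) trace_eq_insert_extra[OF k] by blast
    then have "extra k \<notin> F q"
      using q(3) extra_notin_B[OF k] extra_notin_J[OF k] by blast
    moreover have "B k \<subseteq> F q" using q(3) by blast
    ultimately show False using twins_same_not_extended[OF assms(1) q(1,2)] by blast
  qed
  ultimately show ?thesis unfolding missing_def by blast
qed

lemma finite_missing: "finite missing"
  using finite_V unfolding missing_def d_sets_def by simp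

lemma card_twin_bases_le: "(card V - d) * card twin_bases \<le> d * card missing"
proof (rule double_counting_le[where R = "(\<subseteq>)"])
  show "finite twin_bases"
    using finite_twins_same unfolding twin_bases_def by simp
  show "finite missing" by (rule finite_missing)
next
  fix C assume "C \<in> twin_bases"
  then obtain k l where kl: "(k, l) \<in> twins_same" "C = B k"
    unfolding twin_bases_def by auto
  have k: "k \<in> T3_idx" using twins_same_D(1)[OF kl(1)] .
  have "inj_on (\<lambda>y. insert y C) (V - trace k)"
    using B_subset_trace[OF k] kl(2) by (intro inj_onI) blast
  moreover have "(\<lambda>y. insert y C) ` (V - trace k) \<subseteq> {D \<in> missing. C \<subseteq> D}"
    using insert_twin_base_missing[OF kl(1)] kl(2) by auto
  ultimately have "card (V - trace k) \<le> card {D \<in> missing. C \<subseteq> D}"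
    using finite_missing by (intro card_inj_on_le) auto
  moreover have "card (V - trace k) = card V - d"
    using card_Diff_subset[OF finite_subset[OF _ finite_V] trace_subset_V[OF T3_idx_D(1)[OF k]]]
      trace_subset_V[OF T3_idx_D(1)[OF k]] card_trace[OF T3_idx_D(1,2)[OF k]] by simp
  ultimately show "card V - d \<le> card {D \<in> missing. C \<subseteq> D}" by simp
next
  fix D assume "D \<in> missing"
  then have D: "finite D" "card D = d"
    using finite_V finite_subset unfolding missing_def d_sets_def by auto
  have "{C \<in> twin_bases. C \<subseteq> D} \<subseteq> {C. C \<subseteq> D \<and> card C = d - 1}"
    using T3_idx_D(4) twins_same_D(1) unfolding twin_bases_def by auto
  then have "card {C \<in> twin_bases. C \<subseteq> D} \<le> card {C. C \<subseteq> D \<and> card C = d - 1}"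
    using D(1) by (intro card_mono) simp_all
  also have "\<dots> = d"
    using n_subsets[OF D(1)] D(2) binomial_symmetric[of "d - 1" d] d_ge_2 by simp
  finally show "card {C \<in> twin_bases. C \<subseteq> D} \<le> d" .
qed

definition twins_diff :: "(nat \<times> nat) set" where
  "twins_diff = {(k, l) \<in> twins. B k \<noteq> B l}"

definition core :: "nat \<Rightarrow> nat \<Rightarrow> nat set" where
  "core k l = trace k - {extra k, extra l}"

definition splits :: "(nat set \<times> nat set) set" where
  "splits = {(core k l, {extra k, extra l}) | k l. (k, l) \<in> twins_diff}"

lemma twins_diff_D:
  assumes "(k, l) \<in> twins_diff"
  shows "k \<in> T3_idx" and "l \<in> T3_idx" and "trace l = trace k" and "extra k \<noteq> extra l"
    and "apex k \<noteq> apex l"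
proof -
  show k: "k \<in> T3_idx" and l: "l \<in> T3_idx" and tr: "trace l = trace k"
    using assms unfolding twins_diff_def twins_def by auto
  show "extra k \<noteq> extra l"
    using assms B_eq_trace_minus_extra[OF k] B_eq_trace_minus_extra[OF l] tr unfolding twins_diff_def by auto
  show "apex k \<noteq> apex l"
    using assms twins_apex_neq unfolding twins_diff_def by blast
qed

lemma twins_diff_sym: "(k, l) \<in> twins_diff \<Longrightarrow> (l, k) \<in> twins_diff"
  unfolding twins_diff_def twins_def by auto

lemma core_sym: "(k, l) \<in> twins_diff \<Longrightarrow> core l k = core k l"
  using twins_diff_D(3) unfolding core_def by (simp add: insert_commute)

lemma extra_in_trace_twins_diff:
  assumes "(k, l) \<in> twins_diff"
  shows "extra k \<in> trace k" and "extra l \<in> trace k"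
  using trace_eq_insert_extra[OF twins_diff_D(1)[OF assms]] trace_eq_insert_extra[OF twins_diff_D(2)[OF assms]]
    twins_diff_D(3)[OF assms] by auto

lemma trace_eq_core:
  "(k, l) \<in> twins_diff \<Longrightarrow> trace k = insert (extra k) (insert (extra l) (core k l))"
  using extra_in_trace_twins_diff unfolding core_def by blast

lemma B_eq_core: "(k, l) \<in> twins_diff \<Longrightarrow> B k = insert (extra l) (core k l)"
proof -
  assume kl: "(k, l) \<in> twins_diff"
  have "insert b (A - {a, b}) = A - {a}" if "b \<in> A" "b \<noteq> a" for A :: "nat set" and a b
    using that by auto
  from this[OF extra_in_trace_twins_diff(2)[OF kl] twins_diff_D(4)[OF kl, symmetric]]
  show ?thesis
    unfolding core_def B_eq_trace_minus_extra[OF twins_diff_D(1)[OF kl]] by (rule sym)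
qed

lemma core_subset_V: "(k, l) \<in> twins_diff \<Longrightarrow> core k l \<subseteq> V"
  using trace_subset_V T3_idx_D(1) twins_diff_D(1) unfolding core_def by blast

lemma card_core: "(k, l) \<in> twins_diff \<Longrightarrow> card (core k l) = d - 2"
proof -
  assume kl: "(k, l) \<in> twins_diff"
  show ?thesis
    using extra_in_trace_twins_diff[OF kl] card_trace[OF T3_idx_D(1,2)[OF twins_diff_D(1)[OF kl]]] twins_diff_D(4)[OF kl]
      finite_F[OF T3_idx_D(1)[OF twins_diff_D(1)[OF kl]]]
    unfolding core_def by (simp add: card_Diff_subset)
qed

lemma card_T3_trace_extra_le: "card {q \<in> T3_idx. trace q = D \<and> extra q = x} \<le> 2"
proof (rule card_le_2_if_no_three)
  show "finite {q \<in> T3_idx. trace q = D \<and> extra q = x}"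
    using finite_T3_idx by simp
next
  fix q1 q2 q3 assume "q1 \<in> {q \<in> T3_idx. trace q = D \<and> extra q = x}"
    "q2 \<in> {q \<in> T3_idx. trace q = D \<and> extra q = x}" "q3 \<in> {q \<in> T3_idx. trace q = D \<and> extra q = x}"
    and "q1 \<noteq> q2" "q1 \<noteq> q3" "q2 \<noteq> q3"
  then show False
    using no_three_twins[of q1 q2 q3] B_eq_trace_minus_extra by auto
qed

lemma splits_eq_image: "splits = (\<lambda>z. (core (fst z) (snd z), {extra (fst z), extra (snd z)})) ` twins_diff"
  unfolding splits_def by force

lemma card_twins_diff_le: "card twins_diff \<le> 16 * card splits"
  unfolding splits_eq_image
proof (rule card_le_mult_card_image)
  show "finite twins_diff"
    using finite_twins unfolding twins_diff_def by (simp add: case_prod_unfold)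
next
  let ?f = "\<lambda>z. (core (fst z) (snd z), {extra (fst z), extra (snd z)})"
  fix y assume "y \<in> ?f ` twins_diff"
  then obtain k l where kl: "(k, l) \<in> twins_diff" and y: "y = ?f (k, l)" by force
  define A where "A = {q \<in> T3_idx. trace q = trace k \<and> extra q = extra k}
    \<union> {q \<in> T3_idx. trace q = trace k \<and> extra q = extra l}"
  have "{z \<in> twins_diff. ?f z = y} \<subseteq> A \<times> A"
  proof
    fix z assume z: "z \<in> {z \<in> twins_diff. ?f z = y}"
    obtain k' l' where z_eq: "z = (k', l')" by (cases z)
    have kl': "(k', l') \<in> twins_diff" and core_eq: "core k' l' = core k l"
      and extra_eq: "{extra k', extra l'} = {extra k, extra l}"
      using z z_eq y by auto
    have "trace k' = trace k"
      using trace_eq_core[OF kl'] trace_eq_core[OF kl] core_eq extra_eq by (metis insert_is_Un Un_insert_left)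
    then show "z \<in> A \<times> A"
      using z_eq extra_eq twins_diff_D(1,2,3)[OF kl'] unfolding A_def by (auto simp: doubleton_eq_iff)
  qed
  moreover have "card A \<le> 4"
    using card_Un_le[of "{q \<in> T3_idx. trace q = trace k \<and> extra q = extra k}"
        "{q \<in> T3_idx. trace q = trace k \<and> extra q = extra l}"]
      card_T3_trace_extra_le[of "trace k" "extra k"] card_T3_trace_extra_le[of "trace k" "extra l"]
    unfolding A_def by linarith
  moreover have "finite A"
    using finite_T3_idx unfolding A_def by simp
  ultimately have "card {z \<in> twins_diff. ?f z = y} \<le> card A * card A"
    using card_mono[of "A \<times> A"] by (simp add: card_cartesian_product)
  also have "\<dots> \<le> 4 * 4"
    using \<open>card A \<le> 4\<close> by (intro mult_mono) simp_all
  finally show "card {z \<in> twins_diff. ?f z = y} \<le> 16" by simp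
qed

definition cores :: "nat set set" where
  "cores = {C. C \<subseteq> V \<and> card C = d - 2}"

definition split_edges :: "nat set \<Rightarrow> nat set set" where
  "split_edges C = {p. (C, p) \<in> splits}"

lemma split_edgesE:
  assumes "p \<in> split_edges C" and "u \<in> p"
  obtains k l where "(k, l) \<in> twins_diff" "C = core k l" "extra k = u" "p = {u, extra l}"
proof -
  obtain k l where kl: "(k, l) \<in> twins_diff" "C = core k l" "p = {extra k, extra l}"
    using assms(1) unfolding split_edges_def splits_def by blast
  show thesis
  proof (cases "extra k = u")
    case True
    then show ?thesis using that kl by blast
  next
    case False
    then show ?thesis
      using that[OF twins_diff_sym[OF kl(1)]] kl core_sym assms(2) by (auto simp: insert_commute)
  qed
qed

lemma apex_in_if_trace_extends:
  assumes "r \<in> T3_idx" and "q \<in> {1..m}" and "trace q = insert y (B r)" and "y \<notin> trace r"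
  shows "apex r \<in> F q \<inter> J"
proof -
  have "extra r \<noteq> y" using assms(4) trace_eq_insert_extra[OF assms(1)] by blast
  then have "extra r \<notin> F q"
    using assms(3) extra_notin_B[OF assms(1)] extra_notin_J[OF assms(1)] by blast
  then show ?thesis
    using apex_in_F_if_extends[OF assms(1,2)] apex_in_J[OF assms(1)] assms(3) by blast
qed

lemma apex_eq_if_trace_extends:
  assumes "r \<in> T3_idx" and "q \<in> T3_idx" and "trace q = insert y (B r)" and "y \<notin> trace r"
  shows "apex r = apex q"
  using apex_in_if_trace_extends[OF assms(1) T3_idx_D(1)[OF assms(2)] assms(3,4)] F_Int_J_eq_apex[OF assms(2)]
  by blast

lemma split_edges_disjoint:
  assumes "p \<in> split_edges C" and "q \<in> split_edges C" and "p \<noteq> q"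
  shows "p \<inter> q = {}"
proof (rule ccontr)
  assume "p \<inter> q \<noteq> {}"
  then obtain u where "u \<in> p" "u \<in> q" by blast
  obtain k l where kl: "(k, l) \<in> twins_diff" "C = core k l" "extra k = u" "p = {u, extra l}"
    using split_edgesE[OF assms(1) \<open>u \<in> p\<close>] by blast
  obtain k' l' where kl': "(k', l') \<in> twins_diff" "C = core k' l'" "extra k' = u" "q = {u, extra l'}"
    using split_edgesE[OF assms(2) \<open>u \<in> q\<close>] by blast
  have B_l: "B l = insert u C"
    using B_eq_core[OF twins_diff_sym[OF kl(1)]] core_sym[OF kl(1)] kl(2,3) by simp
  have "extra l' \<noteq> extra l" using kl(4) kl'(4) assms(3) by auto
  moreover have "extra l' \<noteq> u" "extra l' \<notin> C"
    using twins_diff_D(4)[OF kl'(1)] kl'(2,3) unfolding core_def by auto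
  ultimately have "extra l' \<notin> trace l"
    using trace_eq_core[OF kl(1)] twins_diff_D(3)[OF kl(1)] kl(2,3) by auto
  moreover have "trace k' = insert (extra l') (B l)" "trace l' = insert (extra l') (B l)"
    using trace_eq_core[OF kl'(1)] twins_diff_D(3)[OF kl'(1)] kl'(2,3) B_l by (auto simp: insert_commute)
  ultimately have "apex l = apex k'" "apex l = apex l'"
    using apex_eq_if_trace_extends twins_diff_D(1,2) kl(1) kl'(1) by metis+
  then show False
    using twins_diff_D(5)[OF kl'(1)] by simp
qed

lemma extra_in_V: "k \<in> T3_idx \<Longrightarrow> extra k \<in> V"
  using trace_eq_insert_extra trace_subset_V T3_idx_D(1) by blast

lemma missing_across_split_edges:
  assumes "p \<in> split_edges C" and "q \<in> split_edges C" and "p \<noteq> q" and "w \<in> q"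
  shows "\<exists>u\<in>p. insert u (insert w C) \<in> missing"
proof (rule ccontr)
  assume none: "\<not> (\<exists>u\<in>p. insert u (insert w C) \<in> missing)"
  obtain a where "a \<in> p"
    using assms(1) unfolding split_edges_def splits_def by blast
  obtain k l where kl: "(k, l) \<in> twins_diff" "C = core k l" "extra k = a" "p = {a, extra l}"
    using split_edgesE[OF assms(1) \<open>a \<in> p\<close>] by blast
  obtain k' l' where kl': "(k', l') \<in> twins_diff" "C = core k' l'" "extra k' = w" "q = {w, extra l'}"
    using split_edgesE[OF assms(2,4)] by blast
  have disj: "p \<inter> q = {}" by (rule split_edges_disjoint[OF assms(1-3)])
  have B_l': "B l' = insert w C"
    using B_eq_core[OF twins_diff_sym[OF kl'(1)]] core_sym[OF kl'(1)] kl'(2,3) by simp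
  have trace_l': "trace l' = insert w (insert (extra l') C)"
    using trace_eq_core[OF kl'(1)] twins_diff_D(3)[OF kl'(1)] kl'(2,3) by simp
  have trace_k: "trace k = insert a (insert (extra l) C)"
    using trace_eq_core[OF kl(1)] kl(2,3) by simp
  have w_C: "w \<notin> C" and w_V: "w \<in> V"
    using kl'(2,3) extra_in_V[OF twins_diff_D(1)[OF kl'(1)]] unfolding core_def by auto
  have apex_eq: "apex r = apex l'"
    if r: "r \<in> T3_idx" "trace r = trace k" "B r = insert x C" and "x \<in> p" for r x
  proof -
    have x: "x \<notin> C" "x \<in> V" "x \<noteq> w" "x \<notin> trace l'"
      using \<open>x \<in> p\<close> disj kl(2,4) kl'(4) trace_l' extra_in_V[OF twins_diff_D(1)[OF kl(1)]]
        extra_in_V[OF twins_diff_D(2)[OF kl(1)]] kl(3) unfolding core_def by auto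
    have "insert x (insert w C) \<in> d_sets"
      using x(1-3) w_C w_V core_subset_V[OF kl(1)] card_core[OF kl(1)] kl(2) d_ge_2
        finite_subset[OF core_subset_V[OF kl(1)] finite_V] unfolding d_sets_def by auto
    then obtain q1 where q1: "q1 \<in> {1..m}" "card (F q1 \<inter> J) = 1" "trace q1 = insert x (insert w C)"
      using none \<open>x \<in> p\<close> unfolding missing_def edges_G_def by blast
    have "w \<notin> trace r"
      using r(2) trace_k disj kl(4) kl'(4) w_C by auto
    moreover have "trace q1 = insert w (B r)"
      using q1(3) r(3) by (simp add: insert_commute)
    ultimately have "apex r \<in> F q1 \<inter> J"
      using apex_in_if_trace_extends[OF r(1) q1(1)] by blast
    moreover have "apex l' \<in> F q1 \<inter> J"
      using apex_in_if_trace_extends[OF twins_diff_D(2)[OF kl'(1)] q1(1) _ x(4)] q1(3) B_l' by simp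
    ultimately show ?thesis
      using q1(2) by (metis card_1_singletonE singletonD)
  qed
  have "B k = insert (extra l) C"
    using B_eq_core[OF kl(1)] kl(2) by simp
  then have "apex k = apex l'"
    using apex_eq[OF twins_diff_D(1)[OF kl(1)] refl] kl(4) by simp
  have "B l = insert a C"
    using B_eq_core[OF twins_diff_sym[OF kl(1)]] core_sym[OF kl(1)] kl(2,3) by simp
  then have "apex l = apex l'"
    using apex_eq[OF twins_diff_D(2,3)[OF kl(1)]] kl(4) by simp
  moreover note \<open>apex k = apex l'\<close>
  ultimately show False
    using twins_diff_D(5)[OF kl(1)] by simp
qed

lemma split_edges_cores: "p \<in> split_edges C \<Longrightarrow> C \<in> cores"
  unfolding split_edges_def splits_def cores_def using core_subset_V card_core by blast

lemma split_edges_doubleton: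
  assumes "p \<in> split_edges C"
  obtains a b where "p = {a, b}" "a \<noteq> b" "a \<notin> C" "b \<notin> C"
proof -
  obtain k l where "(k, l) \<in> twins_diff" "C = core k l" "p = {extra k, extra l}"
    using assms unfolding split_edges_def splits_def by blast
  then show thesis
    using that twins_diff_D(4) unfolding core_def by blast
qed

lemma finite_splits: "finite splits"
  using finite_twins unfolding splits_eq_image twins_diff_def by (simp add: case_prod_unfold)

lemma card_splits: "card splits = (\<Sum>C\<in>cores. card (split_edges C))"
proof -
  have "splits = Sigma cores split_edges"
    using split_edges_cores unfolding split_edges_def by auto
  moreover have "finite cores"
    using finite_V unfolding cores_def by simp
  moreover have "finite (split_edges C)" for C
    using finite_splits unfolding split_edges_def
    by (rule finite_surj[where f = snd]) force
  ultimately show ?thesis by simp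
qed

lemma split_edge_mem_if_meets:
  assumes "D \<in> missing" and "C \<subseteq> D" and "P \<subseteq> split_edges C" and "card P = 2"
    and "\<forall>p\<in>P. p \<inter> D \<noteq> {}" and "p' \<in> split_edges C" and "p' \<inter> D \<noteq> {}"
  shows "p' \<in> P"
proof -
  obtain p q where P: "P = {p, q}" "p \<noteq> q"
    using assms(4) by (meson card_2_iff)
  have edges: "p \<in> split_edges C" "q \<in> split_edges C"
    using assms(3) P(1) by auto
  have off_C: "r \<inter> C = {}" if "r \<in> split_edges C" for r
    using split_edges_doubleton[OF that] by blast
  have "p \<inter> D \<noteq> {}" "q \<inter> D \<noteq> {}"
    using assms(5) P(1) by simp_all
  then obtain x y where xy: "x \<in> p \<inter> D" "y \<in> q \<inter> D"
    by blast
  have "x \<noteq> y"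
    using xy split_edges_disjoint[OF edges P(2)] by blast
  moreover have "finite D" "card D = d"
    using assms(1) finite_V finite_subset unfolding missing_def d_sets_def by auto
  moreover have "card C = d - 2"
    using split_edges_cores[OF edges(1)] unfolding cores_def by simp
  ultimately have "card (D - C) = 2"
    using assms(2) d_ge_2 by (simp add: card_Diff_subset finite_subset)
  moreover have "{x, y} \<subseteq> D - C"
    using xy off_C[OF edges(1)] off_C[OF edges(2)] by blast
  ultimately have "D - C = {x, y}"
    using \<open>x \<noteq> y\<close> \<open>finite D\<close> by (metis card_2_iff card_subset_eq finite_Diff)
  moreover obtain z where z: "z \<in> p' \<inter> D"
    using assms(7) by blast
  ultimately have "z \<in> {x, y}"
    using off_C[OF assms(6)] by blast
  then have "z \<in> p \<or> z \<in> q"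
    using xy by blast
  then have "p' \<inter> p \<noteq> {} \<or> p' \<inter> q \<noteq> {}"
    using z by blast
  then show ?thesis
    using split_edges_disjoint[OF assms(6) edges(1)] split_edges_disjoint[OF assms(6) edges(2)] P(1)
    by blast
qed

lemma card_split_edges_choose_le: "card (split_edges C) choose 2 \<le> card {D \<in> missing. C \<subseteq> D}"
proof -
  let ?X = "{P. P \<subseteq> split_edges C \<and> card P = 2}"
  let ?Y = "{D \<in> missing. C \<subseteq> D}"
  have fin: "finite (split_edges C)"
    using finite_splits unfolding split_edges_def by (rule finite_surj[where f = snd]) force
  have "1 * card ?X \<le> 1 * card ?Y"
  proof (rule double_counting_le[where R = "\<lambda>P D. \<forall>p\<in>P. p \<inter> D \<noteq> {}"])
    show "finite ?X" using fin by simp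
    show "finite ?Y" using finite_missing by simp
  next
    fix P assume "P \<in> ?X"
    then obtain p q where P: "P = {p, q}" "p \<noteq> q" "p \<in> split_edges C" "q \<in> split_edges C"
      by (auto simp: card_2_iff)
    obtain w where "w \<in> q"
      using split_edges_doubleton[OF P(4)] by blast
    then obtain u where "u \<in> p" "insert u (insert w C) \<in> missing"
      using missing_across_split_edges[OF P(3,4,2)] by blast
    then have "{D \<in> ?Y. \<forall>p\<in>P. p \<inter> D \<noteq> {}} \<noteq> {}"
      using P(1) \<open>w \<in> q\<close> by blast
    moreover have "finite {D \<in> ?Y. \<forall>p\<in>P. p \<inter> D \<noteq> {}}"
      using finite_missing by simp
    ultimately show "1 \<le> card {D \<in> ?Y. \<forall>p\<in>P. p \<inter> D \<noteq> {}}"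
      by (simp add: card_gt_0_iff Suc_le_eq)
  next
    fix D assume D: "D \<in> ?Y"
    define M where "M = {P \<in> ?X. \<forall>p\<in>P. p \<inter> D \<noteq> {}}"
    have sub: "P' \<subseteq> P" if "P \<in> M" "P' \<in> M" for P P'
    proof
      fix p' assume "p' \<in> P'"
      with that D show "p' \<in> P"
        using split_edge_mem_if_meets[of D C P p'] unfolding M_def by auto
    qed
    have "finite M"
      using fin unfolding M_def by simp
    moreover have "\<forall>P\<in>M. \<forall>P'\<in>M. P = P'"
      using sub by (intro ballI subset_antisym) simp_all
    ultimately have "card M \<le> Suc 0"
      using card_le_Suc0_iff_eq by blast
    then show "card {P \<in> ?X. \<forall>p\<in>P. p \<inter> D \<noteq> {}} \<le> 1"
      unfolding M_def by simp
  qed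
  then show ?thesis
    using n_subsets[OF fin, of 2] by simp
qed

lemma finite_cores: "finite cores"
  using finite_V unfolding cores_def by simp

lemma card_cores_le: "card cores \<le> n ^ (d - 2)"
proof -
  have "card cores = card V choose (d - 2)"
    using n_subsets[OF finite_V] unfolding cores_def by simp
  also have "\<dots> \<le> card V ^ (d - 2)"
    by (cases "d - 2 \<le> card V") (simp_all add: binomial_le_pow binomial_eq_0)
  also have "\<dots> \<le> n ^ (d - 2)"
    using card_V by (simp add: power_mono)
  finally show ?thesis .
qed

lemma sum_missing_above_cores_le: "(\<Sum>C\<in>cores. card {D \<in> missing. C \<subseteq> D}) \<le> d\<^sup>2 * card missing"
proof (rule sum_card_related_le[OF finite_cores finite_missing])
  fix D assume "D \<in> missing"
  then have D: "finite D" "card D = d"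
    using finite_V finite_subset unfolding missing_def d_sets_def by auto
  have "card {C \<in> cores. C \<subseteq> D} \<le> card {C. C \<subseteq> D \<and> card C = d - 2}"
    using D(1) unfolding cores_def by (intro card_mono) auto
  also have "\<dots> = d choose 2"
    using n_subsets[OF D(1)] D(2) binomial_symmetric[of 2 d] d_ge_2 by simp
  also have "\<dots> \<le> d\<^sup>2"
    using binomial_le_pow[of 2 d] d_ge_2 by simp
  finally show "card {C \<in> cores. C \<subseteq> D} \<le> d\<^sup>2" .
qed

lemma card_T_idx_le_counts:
  "card (T2_idx \<union> T3_idx) \<le> card d_sets + 2 * card twin_bases + 16 * (\<Sum>C\<in>cores. card (split_edges C))"
proof -
  have "twins = twins_same \<union> twins_diff"
    unfolding twins_same_def twins_diff_def by auto
  then have "card twins \<le> card twins_same + card twins_diff"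
    by (simp add: card_Un_le)
  then show ?thesis
    using card_T_idx_le_twins card_twins_same_le card_twins_diff_le card_splits by linarith
qed

lemma card_twin_bases_real_le:
  assumes "4 * d \<le> n" and "real (card J) \<le> real n / 4" and "real (card missing) \<le> K * real n"
  shows "real (card twin_bases) \<le> 2 * real d * K"
proof -
  have "real n / 2 \<le> real (card V) - real d"
    using card_V J_subset assms(1,2) card_mono[OF _ J_subset] by (simp add: of_nat_diff)
  moreover have "d \<le> card V"
    using calculation assms(1) by simp
  then have "(real (card V) - real d) * real (card twin_bases) \<le> real d * real (card missing)"
    using card_twin_bases_le by (metis of_nat_diff of_nat_le_iff of_nat_mult)
  ultimately have "real n / 2 * real (card twin_bases) \<le> real d * (K * real n)"
    using assms(3) by (smt (verit) mult_left_mono mult_right_mono of_nat_0_le_iff)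
  moreover have "real n > 0"
    using assms(1) d_ge_2 by simp
  ultimately show ?thesis
    by (simp add: field_simps)
qed

lemma sum_split_edges_real_le:
  assumes "K \<ge> 0" and "real (card missing) \<le> K * real n"
  shows "real (\<Sum>C\<in>cores. card (split_edges C)) \<le> real n ^ (d - 2) + 2 * real d * sqrt (K * real n ^ (d - 1))"
proof -
  have "real (\<Sum>C\<in>cores. card (split_edges C))
      \<le> real (card cores) + sqrt (2 * real (card cores) * real (\<Sum>C\<in>cores. card {D \<in> missing. C \<subseteq> D}))"
    using finite_cores card_split_edges_choose_le by (rule sum_le_card_plus_sqrt)
  also have "\<dots> \<le> real n ^ (d - 2) + sqrt (2 * real n ^ (d - 2) * (real d ^ 2 * (K * real n)))"
  proof -
    have cores: "real (card cores) \<le> real n ^ (d - 2)"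
      using card_cores_le by (simp flip: of_nat_power)
    have "real (\<Sum>C\<in>cores. card {D \<in> missing. C \<subseteq> D}) \<le> real d ^ 2 * real (card missing)"
      using of_nat_mono[OF sum_missing_above_cores_le, where 'a = real] by simp
    also have "\<dots> \<le> real d ^ 2 * (K * real n)"
      using assms(2) by (simp add: mult_left_mono)
    finally have "2 * real (card cores) * real (\<Sum>C\<in>cores. card {D \<in> missing. C \<subseteq> D})
        \<le> 2 * real n ^ (d - 2) * (real d ^ 2 * (K * real n))"
      using cores by (intro mult_mono) (simp_all add: sum_nonneg)
    then show ?thesis
      using cores by (intro add_mono real_sqrt_le_mono)
  qed
  also have "2 * real n ^ (d - 2) * (real d ^ 2 * (K * real n)) = (real d * sqrt 2) ^ 2 * (K * real n ^ (d - 1))"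
  proof -
    have "d - 1 = Suc (d - 2)" using d_ge_2 by simp
    then show ?thesis by (simp add: power_mult_distrib algebra_simps)
  qed
  also have "sqrt \<dots> = real d * sqrt 2 * sqrt (K * real n ^ (d - 1))"
    by (simp add: real_sqrt_mult)
  also have "\<dots> \<le> 2 * real d * sqrt (K * real n ^ (d - 1))"
  proof (rule mult_right_mono)
    show "real d * sqrt 2 \<le> 2 * real d"
      using mult_left_mono[of "sqrt 2" 2 "real d"] sqrt2_less_2 by simp
  qed (use assms(1) in simp)
  finally show ?thesis by simp
qed

lemma card_T_idx_le:
  assumes "4 * d \<le> n" and "real (card J) \<le> real n / 4" and "K \<ge> 0"
    and "real (card missing) \<le> K * real n"
  shows "real (card (T2_idx \<union> T3_idx))
    \<le> real (card d_sets) + 32 * real d * (K + sqrt (K * real n ^ (d - 1)) + real n ^ (d - 2))"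
proof -
  let ?X = "sqrt (K * real n ^ (d - 1))" and ?N = "real n ^ (d - 2)"
  have "real (card (T2_idx \<union> T3_idx))
      \<le> real (card d_sets) + 2 * real (card twin_bases) + 16 * real (\<Sum>C\<in>cores. card (split_edges C))"
    using of_nat_mono[OF card_T_idx_le_counts, where 'a = real] by simp
  also have "\<dots> \<le> real (card d_sets) + 4 * real d * K + 16 * ?N + 32 * real d * ?X"
    using card_twin_bases_real_le[OF assms(1,2,4)] sum_split_edges_real_le[OF assms(3,4)] by linarith
  also have "\<dots> \<le> real (card d_sets) + 32 * real d * (K + ?X + ?N)"
  proof -
    have "4 * real d * K \<le> 32 * real d * K" "16 * ?N \<le> 32 * real d * ?N"
      using assms(3) d_ge_2 by (simp_all add: mult_right_mono)
    then show ?thesis by (simp add: algebra_simps)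
  qed
  finally show ?thesis .
qed

lemma T2_Un_T3_eq_image: "T2 n d m F B J \<union> T3 n d m F B J = F ` (T2_idx \<union> T3_idx)"
  unfolding T2_def T3_def T2_idx_def T3_idx_def V_def by auto

lemma card_d_sets: "card d_sets = (n - card J) choose d"
  using n_subsets[OF finite_V] card_V unfolding d_sets_def by simp

lemma card_missing: "card missing = card d_sets - card (edges_G m F J)"
  unfolding missing_def using edges_G_subset_d_sets finite_V unfolding d_sets_def
  by (simp add: card_Diff_subset finite_subset)

end

lemma card_T2_Un_T3_le:
  assumes "d \<ge> 2" and "4 * d \<le> n"
    and "\<forall>i\<in>{1..m}. F i \<subseteq> {1..n} \<and> card (F i) = d + 1" and "inj_on F {1..m}"
    and "\<forall>i\<in>{1..m}. admissible m F i (B i) \<and> (\<forall>B'. admissible m F i B' \<longrightarrow> card B' \<le> card (B i))"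
    and "J \<subseteq> {1..n}" and "real (card J) \<le> real n / 4" and "K \<ge> 0"
    and "real (card (edges_G m F J)) \<ge> real ((n - card J) choose d) - K * real n"
  shows "real (card (T2 n d m F B J \<union> T3 n d m F B J))
    \<le> real ((n - card J) choose d) + 32 * real d * (K + sqrt (K * real n ^ (d - 1)) + real n ^ (d - 2))"
proof -
  interpret admissible_family n m d F B J
    using assms(1,3-6) by unfold_locales auto
  have "real (card missing) \<le> K * real n"
    using card_missing card_d_sets assms(9) card_mono[OF _ edges_G_subset_d_sets] finite_V
    unfolding d_sets_def by (simp add: of_nat_diff)
  then have "real (card (T2_idx \<union> T3_idx))
      \<le> real ((n - card J) choose d) + 32 * real d * (K + sqrt (K * real n ^ (d - 1)) + real n ^ (d - 2))"
    using card_T_idx_le[OF assms(2,7,8)] card_d_sets by simp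
  moreover have "card (T2 n d m F B J \<union> T3 n d m F B J) \<le> card (T2_idx \<union> T3_idx)"
    unfolding T2_Un_T3_eq_image by (rule card_image_le) (simp add: finite_T3_idx T2_idx_def)
  ultimately show ?thesis by linarith
qed

theorem claim3p9:
  fixes d :: nat
  assumes "d \<ge> 2"
  shows "\<exists>C::real. C > 0 \<and> (\<exists>n0::nat. \<forall>n \<ge> n0. \<forall>(m::nat) (F::nat \<Rightarrow> nat set) (B::nat \<Rightarrow> nat set) (J::nat set) (K::real).
     (\<forall>i\<in>{1..m}. F i \<subseteq> {1..n} \<and> card (F i) = d + 1) \<longrightarrow>
     inj_on F {1..m} \<longrightarrow>
     vc_dim_le n m F d \<longrightarrow>
     (\<forall>i\<in>{1..m}. admissible m F i (B i) \<and> (\<forall>B'. admissible m F i B' \<longrightarrow> card B' \<le> card (B i))) \<longrightarrow>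
     J \<subseteq> {1..n} \<longrightarrow> real (card J) \<le> real n / 4 \<longrightarrow>
     K \<ge> 0 \<longrightarrow>
     real (card (edges_G m F J)) \<ge> real ((n - card J) choose d) - K * real n \<longrightarrow>
     real (card (T2 n d m F B J \<union> T3 n d m F B J))
       \<le> real ((n - card J) choose d) + C * (K + sqrt (K * real n ^ (d - 1)) + real n ^ (d - 2)))"
proof (intro exI[of _ "32 * real d"] conjI exI[of _ "4 * d"] allI impI)
  show "32 * real d > 0"
    using assms by simp
qed (rule card_T2_Un_T3_le[OF assms]; assumption)

end
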